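(* Let $S$ and $T$ be ordered trees and let $e\colon S\to T$ be an embedding. Then there exists a rigid surjection $f\colon T\to S$ such that $e$ is the injection of $f$.
   Context: A tree is a finite, non-empty partially ordered set $(T,\sqsubseteq_T)$ with a smallest element (the root) such that the set of predecessors of each element is linearly ordered; each node counts as its own predecessor and successor. For $v,w\in T$, $v\wedge_T w$ is the $\sqsubseteq_T$-largest common predecessor of $v$ and $w$. A tree is ordered if the set of immediate successors of each node carries a fixed linear order; this induces the lexicographic linear order $\leq_T$ on $T$: $v\leq_T w$ if $v\sqsubseteq_T w$, and for $\sqsubseteq_T$-incomparable $v,w$, $v\leq_T w$ iff the immediate successor of $v\wedge_T w$ below $v$ precedes the one below $w$. A morphism $e\colon S\to T$ of ordered trees satisfies $e(v\wedge_S w)=e(v)\wedge_T e(w)$, is monotone from $\leq_S$ to $\leq_T$, and maps root to root; an embedding is an injective morphism. A function $f\colon T\to S$ is a rigid surjection if there is a morphism $e\colon S\to T$ with $f\circ e={\rm id}_S$ and $e(f(w))\sqsubseteq_T w$ for all $w\in T$; such $e$ is unique and is called the injection of $f$. *)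

theory Defs
  imports Main
begin

definition is_tree :: "'a set \<Rightarrow> ('a \<Rightarrow> 'a \<Rightarrow> bool) \<Rightarrow> bool" where
  "is_tree T le \<longleftrightarrow>
     finite T \<and> T \<noteq> {} \<and>
     (\<forall>x\<in>T. le x x) \<and>
     (\<forall>x\<in>T. \<forall>y\<in>T. le x y \<and> le y x \<longrightarrow> x = y) \<and>
     (\<forall>x\<in>T. \<forall>y\<in>T. \<forall>z\<in>T. le x y \<and> le y z \<longrightarrow> le x z) \<and>
     (\<exists>r\<in>T. \<forall>x\<in>T. le r x) \<and>
     (\<forall>x\<in>T. \<forall>y\<in>T. \<forall>z\<in>T. le y x \<and> le z x \<longrightarrow> le y z \<or> le z y)"

definition tree_root :: "'a set \<Rightarrow> ('a \<Rightarrow> 'a \<Rightarrow> bool) \<Rightarrow> 'a" where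
  "tree_root T le = (THE r. r \<in> T \<and> (\<forall>x\<in>T. le r x))"

definition imm_succ :: "'a set \<Rightarrow> ('a \<Rightarrow> 'a \<Rightarrow> bool) \<Rightarrow> 'a \<Rightarrow> 'a \<Rightarrow> bool" where
  "imm_succ T le v w \<longleftrightarrow>
     v \<in> T \<and> w \<in> T \<and> le v w \<and> v \<noteq> w \<and>
     \<not> (\<exists>u\<in>T. le v u \<and> le u w \<and> u \<noteq> v \<and> u \<noteq> w)"

definition is_ordered_tree ::
  "'a set \<Rightarrow> ('a \<Rightarrow> 'a \<Rightarrow> bool) \<Rightarrow> ('a \<Rightarrow> 'a \<Rightarrow> bool) \<Rightarrow> bool" where
  "is_ordered_tree T le sib \<longleftrightarrow>
     is_tree T le \<and>
     (\<forall>v\<in>T. let C = {c. imm_succ T le v c} in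
        (\<forall>x\<in>C. sib x x) \<and>
        (\<forall>x\<in>C. \<forall>y\<in>C. sib x y \<and> sib y x \<longrightarrow> x = y) \<and>
        (\<forall>x\<in>C. \<forall>y\<in>C. \<forall>z\<in>C. sib x y \<and> sib y z \<longrightarrow> sib x z) \<and>
        (\<forall>x\<in>C. \<forall>y\<in>C. sib x y \<or> sib y x))"

definition tree_meet :: "'a set \<Rightarrow> ('a \<Rightarrow> 'a \<Rightarrow> bool) \<Rightarrow> 'a \<Rightarrow> 'a \<Rightarrow> 'a" where
  "tree_meet T le v w =
     (THE z. z \<in> T \<and> le z v \<and> le z w \<and> (\<forall>u\<in>T. le u v \<and> le u w \<longrightarrow> le u z))"

definition succ_toward :: "'a set \<Rightarrow> ('a \<Rightarrow> 'a \<Rightarrow> bool) \<Rightarrow> 'a \<Rightarrow> 'a \<Rightarrow> 'a" where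
  "succ_toward T le m v = (THE c. imm_succ T le m c \<and> le c v)"

definition lex_le ::
  "'a set \<Rightarrow> ('a \<Rightarrow> 'a \<Rightarrow> bool) \<Rightarrow> ('a \<Rightarrow> 'a \<Rightarrow> bool) \<Rightarrow> 'a \<Rightarrow> 'a \<Rightarrow> bool" where
  "lex_le T le sib v w \<longleftrightarrow>
     le v w \<or>
     (\<not> le v w \<and> \<not> le w v \<and>
      sib (succ_toward T le (tree_meet T le v w) v)
          (succ_toward T le (tree_meet T le v w) w))"

definition tree_morphism ::
  "'a set \<Rightarrow> ('a \<Rightarrow> 'a \<Rightarrow> bool) \<Rightarrow> ('a \<Rightarrow> 'a \<Rightarrow> bool) \<Rightarrow>
   'b set \<Rightarrow> ('b \<Rightarrow> 'b \<Rightarrow> bool) \<Rightarrow> ('b \<Rightarrow> 'b \<Rightarrow> bool) \<Rightarrow> ('a \<Rightarrow> 'b) \<Rightarrow> bool" where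
  "tree_morphism S leS sibS T leT sibT e \<longleftrightarrow>
     e ` S \<subseteq> T \<and>
     (\<forall>v\<in>S. \<forall>w\<in>S. e (tree_meet S leS v w) = tree_meet T leT (e v) (e w)) \<and>
     (\<forall>v\<in>S. \<forall>w\<in>S. lex_le S leS sibS v w \<longrightarrow> lex_le T leT sibT (e v) (e w)) \<and>
     e (tree_root S leS) = tree_root T leT"

definition tree_embedding ::
  "'a set \<Rightarrow> ('a \<Rightarrow> 'a \<Rightarrow> bool) \<Rightarrow> ('a \<Rightarrow> 'a \<Rightarrow> bool) \<Rightarrow>
   'b set \<Rightarrow> ('b \<Rightarrow> 'b \<Rightarrow> bool) \<Rightarrow> ('b \<Rightarrow> 'b \<Rightarrow> bool) \<Rightarrow> ('a \<Rightarrow> 'b) \<Rightarrow> bool" where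
  "tree_embedding S leS sibS T leT sibT e \<longleftrightarrow>
     tree_morphism S leS sibS T leT sibT e \<and> inj_on e S"

text \<open>e witnesses that f : T \<rightarrow> S is a rigid surjection (e is "the injection of f";
  such e is unique by the paper).\<close>
definition is_injection_of ::
  "'b set \<Rightarrow> ('b \<Rightarrow> 'b \<Rightarrow> bool) \<Rightarrow> ('b \<Rightarrow> 'b \<Rightarrow> bool) \<Rightarrow>
   'a set \<Rightarrow> ('a \<Rightarrow> 'a \<Rightarrow> bool) \<Rightarrow> ('a \<Rightarrow> 'a \<Rightarrow> bool) \<Rightarrow>
   ('b \<Rightarrow> 'a) \<Rightarrow> ('a \<Rightarrow> 'b) \<Rightarrow> bool" where
  "is_injection_of T leT sibT S leS sibS f e \<longleftrightarrow>
     f ` T \<subseteq> S \<and>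
     tree_morphism S leS sibS T leT sibT e \<and>
     (\<forall>s\<in>S. f (e s) = s) \<and>
     (\<forall>w\<in>T. leT (e (f w)) w)"

definition rigid_surjection ::
  "'b set \<Rightarrow> ('b \<Rightarrow> 'b \<Rightarrow> bool) \<Rightarrow> ('b \<Rightarrow> 'b \<Rightarrow> bool) \<Rightarrow>
   'a set \<Rightarrow> ('a \<Rightarrow> 'a \<Rightarrow> bool) \<Rightarrow> ('a \<Rightarrow> 'a \<Rightarrow> bool) \<Rightarrow> ('b \<Rightarrow> 'a) \<Rightarrow> bool" where
  "rigid_surjection T leT sibT S leS sibS f \<longleftrightarrow>
     (\<exists>e. is_injection_of T leT sibT S leS sibS f e)"

end

theory Submission
  imports Defs
begin

text \<open>Send w to the node s whose image e s is the largest image of e below w. Such a node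
  exists because the images below w form a nonempty chain (it contains the root of T, which is
  the image of the root of S), and it is unique because e is injective. Then e (f w) \<sqsubseteq> w by
  construction, and f (e s) = s since e s is itself the largest image below e s.\<close>

lemma finite_chain_has_greatest:
  assumes "finite A" "A \<noteq> {}"
    and "\<And>x y z. x \<in> A \<Longrightarrow> y \<in> A \<Longrightarrow> z \<in> A \<Longrightarrow> le x y \<Longrightarrow> le y z \<Longrightarrow> le x z"
    and "\<And>x y. x \<in> A \<Longrightarrow> y \<in> A \<Longrightarrow> le x y \<or> le y x"
  shows "\<exists>m\<in>A. \<forall>a\<in>A. le a m"
  using assms
proof (induction A rule: finite_ne_induct)
  case (singleton x)
  then show ?case by blast
next
  case (insert x F)
  have "\<exists>m\<in>F. \<forall>a\<in>F. le a m"
    by (rule insert.IH) (use insert.prems in blast)+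
  then obtain m where m: "m \<in> F" "\<forall>a\<in>F. le a m" by blast
  show ?case
  proof (cases "le x m")
    case True
    with m show ?thesis by blast
  next
    case False
    then have "le m x" using insert.prems(2)[of x m] m(1) by simp
    then have "\<forall>a\<in>F. le a x" using insert.prems(1) m by blast
    moreover have "le x x" using insert.prems(2) by blast
    ultimately show ?thesis by blast
  qed
qed

lemma tree_refl: "is_tree T le \<Longrightarrow> x \<in> T \<Longrightarrow> le x x"
  unfolding is_tree_def by (elim conjE) blast

lemma tree_antisym: "is_tree T le \<Longrightarrow> x \<in> T \<Longrightarrow> y \<in> T \<Longrightarrow> le x y \<Longrightarrow> le y x \<Longrightarrow> x = y"
  unfolding is_tree_def by (elim conjE) blast

lemma tree_trans:
  "is_tree T le \<Longrightarrow> x \<in> T \<Longrightarrow> y \<in> T \<Longrightarrow> z \<in> T \<Longrightarrow> le x y \<Longrightarrow> le y z \<Longrightarrow> le x z"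
  unfolding is_tree_def by (elim conjE) blast

lemma tree_predecessors_linear:
  "is_tree T le \<Longrightarrow> w \<in> T \<Longrightarrow> x \<in> T \<Longrightarrow> y \<in> T \<Longrightarrow> le x w \<Longrightarrow> le y w \<Longrightarrow> le x y \<or> le y x"
  unfolding is_tree_def by (elim conjE) blast

lemma tree_root_least:
  assumes "is_tree X le"
  shows "tree_root X le \<in> X" and "\<forall>x\<in>X. le (tree_root X le) x"
proof -
  obtain r where r: "r \<in> X" "\<forall>x\<in>X. le r x"
    using assms unfolding is_tree_def by (elim conjE) blast
  have "tree_root X le = r"
    unfolding tree_root_def
  proof (rule the_equality)
    show "r \<in> X \<and> (\<forall>x\<in>X. le r x)" using r by blast
    show "r' = r" if "r' \<in> X \<and> (\<forall>x\<in>X. le r' x)" for r'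
      using that r tree_antisym[OF assms] by blast
  qed
  with r show "tree_root X le \<in> X" and "\<forall>x\<in>X. le (tree_root X le) x" by simp_all
qed

lemma greatest_image_below:
  assumes T: "is_tree T le" and "finite S" and eS: "e ` S \<subseteq> T"
    and "r \<in> S" "e r = tree_root T le" and w: "w \<in> T"
  shows "\<exists>s\<in>S. le (e s) w \<and> (\<forall>s'\<in>S. le (e s') w \<longrightarrow> le (e s') (e s))"
proof -
  let ?A = "e ` {s\<in>S. le (e s) w}"
  have A: "?A \<subseteq> T" using eS by blast
  have "\<exists>m\<in>?A. \<forall>a\<in>?A. le a m"
  proof (rule finite_chain_has_greatest)
    show "finite ?A" using \<open>finite S\<close> by simp
    show "?A \<noteq> {}" using assms tree_root_least(2)[OF T] by force
    show "le x z" if "x \<in> ?A" "y \<in> ?A" "z \<in> ?A" "le x y" "le y z" for x y z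
      using tree_trans[OF T] that A by blast
    show "le x y \<or> le y x" if "x \<in> ?A" "y \<in> ?A" for x y
      using tree_predecessors_linear[OF T w] that A by blast
  qed
  then show ?thesis by blast
qed

lemma tree_retraction_exists:
  assumes T: "is_tree T le" and "finite S" and eS: "e ` S \<subseteq> T" and inj: "inj_on e S"
    and "r \<in> S" "e r = tree_root T le"
  shows "\<exists>f. f ` T \<subseteq> S \<and> (\<forall>s\<in>S. f (e s) = s) \<and> (\<forall>w\<in>T. le (e (f w)) w)"
proof -
  obtain f where f: "\<And>w. w \<in> T \<Longrightarrow>
      f w \<in> S \<and> le (e (f w)) w \<and> (\<forall>s'\<in>S. le (e s') w \<longrightarrow> le (e s') (e (f w)))"
    using greatest_image_below[OF assms(1-3,5,6)] by metis
  have "f (e s) = s" if s: "s \<in> S" for s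
  proof -
    have es: "e s \<in> T" using eS s by blast
    then have "le (e s) (e s)" by (rule tree_refl[OF T])
    with f[OF es] s have "le (e s) (e (f (e s)))" "le (e (f (e s))) (e s)" "f (e s) \<in> S"
      by simp_all
    then have "e (f (e s)) = e s" using tree_antisym[OF T] eS s by blast
    with inj s \<open>f (e s) \<in> S\<close> show ?thesis by (meson inj_on_eq_iff)
  qed
  with f show ?thesis by blast
qed

theorem lemma2p3:
  fixes S :: "'a set" and leS sibS :: "'a \<Rightarrow> 'a \<Rightarrow> bool"
    and T :: "'b set" and leT sibT :: "'b \<Rightarrow> 'b \<Rightarrow> bool"
    and e :: "'a \<Rightarrow> 'b"
  assumes "is_ordered_tree S leS sibS"
    and "is_ordered_tree T leT sibT"
    and "tree_embedding S leS sibS T leT sibT e"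
  shows "\<exists>f. rigid_surjection T leT sibT S leS sibS f \<and>
             is_injection_of T leT sibT S leS sibS f e"
proof -
  have S: "is_tree S leS" and T: "is_tree T leT"
    using assms(1,2) unfolding is_ordered_tree_def by auto
  have mor: "tree_morphism S leS sibS T leT sibT e" and inj: "inj_on e S"
    using assms(3) unfolding tree_embedding_def by auto
  then have "e ` S \<subseteq> T" and "e (tree_root S leS) = tree_root T leT"
    unfolding tree_morphism_def by auto
  moreover have "finite S" using S unfolding is_tree_def by (elim conjE)
  ultimately obtain f where "f ` T \<subseteq> S" "\<forall>s\<in>S. f (e s) = s" "\<forall>w\<in>T. leT (e (f w)) w"
    using tree_retraction_exists[OF T _ _ inj tree_root_least(1)[OF S]] by blast
  with mor have "is_injection_of T leT sibT S leS sibS f e"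
    unfolding is_injection_of_def by blast
  then show ?thesis unfolding rigid_surjection_def by blast
qed

end
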